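(* Let $n\geq 2$, let $\Gamma=\langle\mathbb{Z}^n,(0,-I_n)\rangle\subseteq\mathrm{Aff}(\mathbb{R}^n)$ with holonomy group $F=\{I_n,-I_n\}$, and let $\varphi=\xi_{(d,D)}\in\mathrm{Aut}(\Gamma)$ (so that $d\in(\tfrac12\mathbb{Z})^n$ and $D\in\mathrm{GL}_n(\mathbb{Z})$). Then $$R(\varphi)=\left(\frac12\sum_{A\in F}|\det(I_n-AD)|_\infty\right)+O(I_n-D,2d).$$
   Context: $\mathrm{Aff}(\mathbb{R}^n)=\mathbb{R}^n\rtimes\mathrm{GL}_n(\mathbb{R})$ with multiplication $(d_1,D_1)(d_2,D_2)=(d_1+D_1d_2,D_1D_2)$; $\mathbb{Z}^n$ denotes $\{(z,I_n)\mid z\in\mathbb{Z}^n\}$. For $(d,D)\in\mathrm{Aff}(\mathbb{R}^n)$, $\xi_{(d,D)}$ denotes $\gamma\mapsto(d,D)\gamma(d,D)^{-1}$; every automorphism of $\Gamma$ has this form, with $d\in(\frac12\mathbb{Z})^n$. $R(\varphi)$ is the number of classes of the relation $g\sim g'\iff\exists h\in\Gamma: g=hg'\varphi(h)^{-1}$. For an integer $x$, $|x|_\infty=|x|$ if $x\neq0$ and $\infty$ if $x=0$. For $B\in\mathbb{Z}^{n\times n}$, $b\in\mathbb{Z}^n$, $O(B,b)$ is the number of solutions $\bar x\in\mathbb{Z}_2^n$ of $\bar B\bar x=\bar b$ over $\mathbb{Z}_2$, bars denoting reduction mod $2$. *)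

theory Defs
  imports "HOL-Analysis.Analysis"
begin

text \<open>Elements of Aff(R^n) = R^n semidirect GL_n(R), as pairs (d, D).
  The dimension n is the cardinality of the finite index type 'n.\<close>
type_synonym 'n aff = "(real^'n) \<times> (real^'n^'n)"

definition aff_mult :: "'n::finite aff \<Rightarrow> 'n aff \<Rightarrow> 'n aff" where
  "aff_mult g h = (fst g + snd g *v fst h, snd g ** snd h)"

definition aff_inv :: "'n::finite aff \<Rightarrow> 'n aff" where
  "aff_inv g = (- (matrix_inv (snd g) *v fst g), matrix_inv (snd g))"

definition xi :: "'n::finite aff \<Rightarrow> 'n aff \<Rightarrow> 'n aff" where
  "xi g x = aff_mult (aff_mult g x) (aff_inv g)"

inductive_set Gamma :: "'n::finite aff set" where
  transl: "(\<forall>i. z $ i \<in> \<int>) \<Longrightarrow> (z, mat 1) \<in> Gamma"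
| minus: "(0, - mat 1) \<in> Gamma"
| mult: "g \<in> Gamma \<Longrightarrow> h \<in> Gamma \<Longrightarrow> aff_mult g h \<in> Gamma"
| inv: "g \<in> Gamma \<Longrightarrow> aff_inv g \<in> Gamma"

definition twisted_rel :: "('n::finite aff \<Rightarrow> 'n aff) \<Rightarrow> ('n aff \<times> 'n aff) set" where
  "twisted_rel phi = {(g, g'). g \<in> Gamma \<and> g' \<in> Gamma \<and>
      (\<exists>h\<in>Gamma. g = aff_mult (aff_mult h g') (aff_inv (phi h)))}"

definition reidemeister :: "('n::finite aff \<Rightarrow> 'n aff) \<Rightarrow> ereal" where
  "reidemeister phi = (if finite (Gamma // twisted_rel phi)
      then ereal (real (card (Gamma // twisted_rel phi))) else \<infinity>)"

definition abs_inf :: "real \<Rightarrow> ereal" where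
  "abs_inf x = (if x = 0 then \<infinity> else ereal \<bar>x\<bar>)"

text \<open>O(B,b): number of solutions in Z_2^n of  B x = b  mod 2; Z_2^n is represented
  by 0/1 integer vectors.\<close>
definition O_count :: "int^'n^'n \<Rightarrow> int^'n::finite \<Rightarrow> nat" where
  "O_count B b = card {x :: int^'n. (\<forall>i. x $ i \<in> {0, 1}) \<and>
      (\<forall>i. (B *v x) $ i mod 2 = b $ i mod 2)}"

end

theory Submission
  imports Defs
begin

(*
  Gamma consists of the pairs (z, A) with z in Z^n and A = I or A = -I, and phi = xi (d, D)
  maps (w, I) to (D w, I) and (w, -I) to (D w + 2 d, -I).  Twisted conjugation by (w, I),
  resp. (w, -I), keeps the holonomy A of (z, A) and replaces z by z + M w, resp. by
  -z - c + M w, where M = I - A D and c = 2 A d.  So the Reidemeister classes of holonomy A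
  are the orbits of the involution x |-> -x - c on Z^n / M Z^n.  When det M = 0 there are
  infinitely many of them; otherwise Z^n / M Z^n has |det M| elements and the number of
  orbits is (|det M| + #fixed points) / 2.  Diagonalizing M by unimodular row and column
  operations splits the fixed point equation 2 x = -c (mod M Z^n) into one congruence per
  coordinate, and each of them has exactly as many solutions as the corresponding equation
  over Z_2; hence #fixed points = O(M, c).  Finally I + D = I - D and -2 d = 2 d modulo 2, so
  both holonomies contribute the same O(I - D, 2 d).
*)

section \<open>Unimodular diagonalization of integer matrices\<close>

lemma invertible_mat_1: "invertible (mat 1 :: 'a::semiring_1^'n::finite^'n)"
  unfolding invertible_def by (rule exI[of _ "mat 1"]) simp

lemma invertible_transpose:
  fixes A :: "'a::comm_semiring_1^'n::finite^'n"
  assumes "invertible A"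
  shows "invertible (transpose A)"
proof -
  obtain A' where "A ** A' = mat 1" "A' ** A = mat 1"
    using assms unfolding invertible_def by blast
  then have "transpose A ** transpose A' = mat 1" "transpose A' ** transpose A = mat 1"
    by (metis matrix_transpose_mul transpose_mat)+
  then show ?thesis
    unfolding invertible_def by blast
qed

lemma matrix_mul_uminus_left: "(- A) ** B = - (A ** B :: 'a::ring_1^'n::finite^'m::finite)"
  by (simp add: matrix_matrix_mult_def vec_eq_iff sum_negf)

lemma matrix_mul_uminus_right: "A ** (- B) = - (A ** B :: 'a::ring_1^'n::finite^'m::finite)"
  by (simp add: matrix_matrix_mult_def vec_eq_iff sum_negf)

lemma matrix_vector_mult_uminus_left: "(- A) *v x = - (A *v x :: 'a::ring_1^'m::finite)"
  by (simp add: matrix_vector_mult_def vec_eq_iff sum_negf)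

lemma matrix_vector_mult_uminus_right: "A *v (- x) = - (A *v x :: 'a::ring_1^'m::finite)"
  by (simp add: matrix_vector_mult_def vec_eq_iff sum_negf)

lemma matrix_inv_unique:
  fixes A B :: "'a::field^'n::finite^'n"
  assumes "A ** B = mat 1" "B ** A = mat 1"
  shows "matrix_inv A = B"
proof -
  have "\<exists>A'. A ** A' = mat 1 \<and> A' ** A = mat 1"
    using assms by blast
  then have "A ** matrix_inv A = mat 1 \<and> matrix_inv A ** A = mat 1"
    unfolding matrix_inv_def by (rule someI_ex)
  then have "matrix_inv A = matrix_inv A ** (A ** B)"
    using assms(1) by simp
  also have "\<dots> = B"
    using \<open>A ** matrix_inv A = mat 1 \<and> matrix_inv A ** A = mat 1\<close> by (simp add: matrix_mul_assoc)
  finally show ?thesis .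
qed

lemma matrix_inv_mat_1: "matrix_inv (mat 1 :: 'a::field^'n::finite^'n) = mat 1"
  by (rule matrix_inv_unique) simp_all

lemma matrix_inv_uminus_mat_1: "matrix_inv (- mat 1 :: 'a::field^'n::finite^'n) = - mat 1"
  by (rule matrix_inv_unique) (simp_all add: matrix_mul_uminus_left matrix_mul_uminus_right)

definition unimodular_equiv :: "'a::comm_ring_1^'n::finite^'n \<Rightarrow> 'a^'n^'n \<Rightarrow> bool" where
  "unimodular_equiv M N \<longleftrightarrow> (\<exists>P Q. invertible P \<and> invertible Q \<and> N = P ** M ** Q)"

lemma unimodular_equiv_refl: "unimodular_equiv M M"
  unfolding unimodular_equiv_def using invertible_mat_1 by force

lemma unimodular_equiv_trans:
  assumes "unimodular_equiv M N" "unimodular_equiv N K"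
  shows "unimodular_equiv M K"
proof -
  obtain P Q P' Q' where "invertible P" "invertible Q" "N = P ** M ** Q"
    and "invertible P'" "invertible Q'" "K = P' ** N ** Q'"
    using assms unfolding unimodular_equiv_def by blast
  then show ?thesis
    unfolding unimodular_equiv_def
    by (intro exI[of _ "P' ** P"] exI[of _ "Q ** Q'"]) (simp add: invertible_mult matrix_mul_assoc)
qed

lemma unimodular_equiv_mult_right: "invertible Q \<Longrightarrow> unimodular_equiv N (N ** Q)"
  unfolding unimodular_equiv_def using invertible_mat_1 by force

lemma unimodular_equiv_transpose:
  assumes "unimodular_equiv M N"
  shows "unimodular_equiv (transpose M) (transpose N)"
proof -
  obtain P Q where "invertible P" "invertible Q" "N = P ** M ** Q"
    using assms unfolding unimodular_equiv_def by blast
  then show ?thesis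
    unfolding unimodular_equiv_def
    by (intro exI[of _ "transpose Q"] exI[of _ "transpose P"])
      (simp add: invertible_transpose matrix_transpose_mul matrix_mul_assoc)
qed

definition transvection :: "'n::finite \<Rightarrow> 'n \<Rightarrow> 'a::ring_1 \<Rightarrow> 'a^'n^'n" where
  "transvection i j t = (\<chi> a b. if a = b then 1 else if a = i \<and> b = j then t else 0)"

lemma matrix_mul_transvection:
  assumes "i \<noteq> j"
  shows "(N ** transvection i j t) $ a $ b = N $ a $ b + (if b = j then N $ a $ i * t else 0)"
proof -
  have "(N ** transvection i j t) $ a $ b =
      (\<Sum>c\<in>UNIV. (if c = b then N $ a $ c else 0) + (if c = i \<and> b = j then N $ a $ i * t else 0))"
    unfolding matrix_matrix_mult_def transvection_def by (auto intro: sum.cong simp: assms)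
  then show ?thesis
    by (simp add: sum.distrib)
qed

lemma invertible_transvection:
  assumes "i \<noteq> j"
  shows "invertible (transvection i j t)"
proof -
  have "transvection i j t ** transvection i j (- t) = mat 1"
    "transvection i j (- t) ** transvection i j t = mat 1"
    using assms by (simp_all add: vec_eq_iff matrix_mul_transvection) (auto simp: mat_def transvection_def)
  then show ?thesis
    unfolding invertible_def by blast
qed

definition swap_matrix :: "'n::finite \<Rightarrow> 'n \<Rightarrow> 'a::semiring_1^'n^'n" where
  "swap_matrix i j = (\<chi> c b. if c = Transposition.transpose i j b then 1 else 0)"

lemma matrix_mul_swap_matrix:
  "(N ** swap_matrix i j) $ a $ b = N $ a $ Transposition.transpose i j b"
  unfolding matrix_matrix_mult_def swap_matrix_def by (simp add: if_distrib cong: if_cong)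

lemma invertible_swap_matrix: "invertible (swap_matrix i j :: 'a::semiring_1^'n::finite^'n)"
proof -
  have "swap_matrix i j ** swap_matrix i j = (mat 1 :: 'a^'n^'n)"
    by (simp add: vec_eq_iff matrix_mul_swap_matrix) (auto simp: mat_def swap_matrix_def)
  then show ?thesis
    unfolding invertible_def by blast
qed

definition cross_cleared :: "'n::finite \<Rightarrow> 'a::zero^'n^'n \<Rightarrow> bool" where
  "cross_cleared k N \<longleftrightarrow> (\<forall>j. j \<noteq> k \<longrightarrow> N $ k $ j = 0 \<and> N $ j $ k = 0)"

definition cross_support :: "'n::finite \<Rightarrow> 'a::zero^'n^'n \<Rightarrow> nat" where
  "cross_support k N = card {j. j \<noteq> k \<and> N $ k $ j \<noteq> 0} + card {j. j \<noteq> k \<and> N $ j $ k \<noteq> 0}"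

lemma cross_cleared_transpose: "cross_cleared k (transpose N) = cross_cleared k N"
  unfolding cross_cleared_def transpose_def by auto

lemma cross_support_transpose: "cross_support k (transpose N) = cross_support k N"
  unfolding cross_support_def transpose_def by auto

lemma cross_support_le: "cross_support k (N :: 'a::zero^'n::finite^'n) \<le> 2 * CARD('n)"
proof -
  have "card {j. P j} \<le> CARD('n)" for P :: "'n \<Rightarrow> bool"
    by (rule card_mono) simp_all
  then have "cross_support k N \<le> CARD('n) + CARD('n)"
    unfolding cross_support_def by (intro add_mono)
  then show ?thesis
    by simp
qed

lemma cross_cleared_mult_swap_matrix:
  assumes "cross_cleared k N" "k \<noteq> i" "k \<noteq> j"
  shows "cross_cleared k (N ** swap_matrix i j)"
proof -
  have "Transposition.transpose i j b = k \<longleftrightarrow> b = k" for b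
    using assms(2,3) by (auto simp: Transposition.transpose_def)
  then show ?thesis
    using assms(1) unfolding cross_cleared_def matrix_mul_swap_matrix by metis
qed

definition pivot_measure :: "'n::finite \<Rightarrow> int^'n^'n \<Rightarrow> nat" where
  "pivot_measure k N = nat \<bar>N $ k $ k\<bar> * (2 * CARD('n) + 1) + cross_support k N"

lemma pivot_measure_less:
  assumes "nat \<bar>N' $ k $ k\<bar> < nat \<bar>N $ k $ k\<bar> \<or>
      (N' $ k $ k = N $ k $ k \<and> cross_support k N' < cross_support k N)"
  shows "pivot_measure k N' < pivot_measure k (N :: int^'n::finite^'n)"
  using assms
proof
  assume less: "nat \<bar>N' $ k $ k\<bar> < nat \<bar>N $ k $ k\<bar>"
  have "pivot_measure k N' < (nat \<bar>N' $ k $ k\<bar> + 1) * (2 * CARD('n) + 1)"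
    using cross_support_le[of k N'] unfolding pivot_measure_def by simp
  also have "\<dots> \<le> pivot_measure k N"
    using less unfolding pivot_measure_def by (intro trans_le_add1 mult_right_mono) auto
  finally show ?thesis .
qed (auto simp: pivot_measure_def)

lemma pivot_measure_transpose: "pivot_measure k (transpose N) = pivot_measure k N"
  unfolding pivot_measure_def cross_support_transpose by (simp add: transpose_def)

lemma transvection_reduces_entry:
  fixes N :: "int^'n::finite^'n"
  assumes "j \<noteq> k"
  defines "N' \<equiv> N ** transvection k j (- (N $ k $ j div N $ k $ k))"
  shows "unimodular_equiv N N'" and "N' $ k $ j = N $ k $ j mod N $ k $ k"
    and "y \<noteq> j \<Longrightarrow> N' $ x $ y = N $ x $ y"
    and "cross_cleared i N \<Longrightarrow> i \<noteq> k \<Longrightarrow> i \<noteq> j \<Longrightarrow> cross_cleared i N'"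
proof -
  have N': "N' $ x $ y = N $ x $ y - (if y = j then N $ x $ k * (N $ k $ j div N $ k $ k) else 0)" for x y
    unfolding N'_def using assms(1) by (simp add: matrix_mul_transvection)
  show "unimodular_equiv N N'"
    unfolding N'_def using assms(1) by (intro unimodular_equiv_mult_right invertible_transvection) auto
  show "N' $ k $ j = N $ k $ j mod N $ k $ k"
    by (simp add: N' minus_mult_div_eq_mod)
  show "y \<noteq> j \<Longrightarrow> N' $ x $ y = N $ x $ y"
    by (simp add: N')
  show "cross_cleared i N \<Longrightarrow> i \<noteq> k \<Longrightarrow> i \<noteq> j \<Longrightarrow> cross_cleared i N'"
    unfolding cross_cleared_def N' by auto
qed

text \<open>
  One step of the Euclidean algorithm on the pivot \<open>N $ k $ k\<close> and an entry of its row: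
  either the entry becomes zero, or the remainder replaces the pivot.\<close>
lemma reduce_row_entry:
  fixes N :: "int^'n::finite^'n"
  assumes S: "\<forall>i\<in>S. cross_cleared i N" and "k \<notin> S" and pivot: "N $ k $ k \<noteq> 0"
    and j: "j \<noteq> k" "N $ k $ j \<noteq> 0"
  shows "\<exists>N'. unimodular_equiv N N' \<and> (\<forall>i\<in>S. cross_cleared i N') \<and> N' $ k $ k \<noteq> 0 \<and>
    pivot_measure k N' < pivot_measure k N"
proof -
  define N1 where "N1 = N ** transvection k j (- (N $ k $ j div N $ k $ k))"
  note N1 = transvection_reduces_entry[OF j(1), where N = N, folded N1_def]
  have "j \<notin> S"
    using S j unfolding cross_cleared_def by auto
  then have S1: "\<forall>i\<in>S. cross_cleared i N1"
    using S \<open>k \<notin> S\<close> N1(4) by metis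
  show ?thesis
  proof (cases "N $ k $ j mod N $ k $ k = 0")
    case True
    then have "{y. y \<noteq> k \<and> N1 $ k $ y \<noteq> 0} = {y. y \<noteq> k \<and> N $ k $ y \<noteq> 0} - {j}"
      using N1(2,3) by auto metis
    then have "card {y. y \<noteq> k \<and> N1 $ k $ y \<noteq> 0} < card {y. y \<noteq> k \<and> N $ k $ y \<noteq> 0}"
      using j by (simp only:) (rule card_Diff1_less; simp)
    then have "cross_support k N1 < cross_support k N"
      unfolding cross_support_def using N1(3) j(1) by simp
    then show ?thesis
      using N1(1,3) S1 pivot j(1) pivot_measure_less[of N1 k N] by (intro exI[of _ N1]) simp
  next
    case False
    define N2 where "N2 = N1 ** swap_matrix j k"
    have "unimodular_equiv N N2"
      unfolding N2_def by (rule unimodular_equiv_trans[OF N1(1) unimodular_equiv_mult_right[OF invertible_swap_matrix]])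
    moreover have "\<forall>i\<in>S. cross_cleared i N2"
      unfolding N2_def using S1 \<open>k \<notin> S\<close> \<open>j \<notin> S\<close> by (metis cross_cleared_mult_swap_matrix)
    moreover have N2_kk: "N2 $ k $ k = N $ k $ j mod N $ k $ k"
      unfolding N2_def matrix_mul_swap_matrix using N1(2) by simp
    moreover have "nat \<bar>N2 $ k $ k\<bar> < nat \<bar>N $ k $ k\<bar>"
      unfolding N2_kk using pivot by (simp add: abs_mod_less)
    ultimately show ?thesis
      using False pivot_measure_less[of N2 k N] by (intro exI[of _ N2]) simp
  qed
qed

lemma reduce_col_entry:
  fixes N :: "int^'n::finite^'n"
  assumes "\<forall>i\<in>S. cross_cleared i N" and "k \<notin> S" and "N $ k $ k \<noteq> 0"
    and "j \<noteq> k" "N $ j $ k \<noteq> 0"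
  shows "\<exists>N'. unimodular_equiv N N' \<and> (\<forall>i\<in>S. cross_cleared i N') \<and> N' $ k $ k \<noteq> 0 \<and>
    pivot_measure k N' < pivot_measure k N"
proof -
  have T: "\<forall>i\<in>S. cross_cleared i (transpose N)" "transpose N $ k $ k = N $ k $ k"
    "transpose N $ k $ j = N $ j $ k"
    using assms(1) by (simp_all add: cross_cleared_transpose) (simp_all add: transpose_def)
  obtain N' where "unimodular_equiv (transpose N) N'" "\<forall>i\<in>S. cross_cleared i N'" "N' $ k $ k \<noteq> 0"
    "pivot_measure k N' < pivot_measure k N"
    using reduce_row_entry[OF T(1) \<open>k \<notin> S\<close>, of j] assms(3-5)
    unfolding T(2,3) pivot_measure_transpose by blast
  moreover have "unimodular_equiv N (transpose N')"
    using unimodular_equiv_transpose[OF \<open>unimodular_equiv (transpose N) N'\<close>] by simp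
  moreover have "transpose N' $ k $ k = N' $ k $ k"
    by (simp add: transpose_def)
  ultimately show ?thesis
    by (intro exI[of _ "transpose N'"]) (simp add: cross_cleared_transpose pivot_measure_transpose)
qed

lemma clear_cross_nonzero_pivot:
  fixes N :: "int^'n::finite^'n"
  assumes "\<forall>i\<in>S. cross_cleared i N" "k \<notin> S" "N $ k $ k \<noteq> 0"
  shows "\<exists>N'. unimodular_equiv N N' \<and> (\<forall>i\<in>insert k S. cross_cleared i N')"
  using assms
proof (induction "pivot_measure k N" arbitrary: N rule: less_induct)
  case less
  show ?case
  proof (cases "cross_cleared k N")
    case True
    then show ?thesis
      using less.prems unimodular_equiv_refl by blast
  next
    case False
    then obtain j where "j \<noteq> k" "N $ k $ j \<noteq> 0 \<or> N $ j $ k \<noteq> 0"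
      unfolding cross_cleared_def by blast
    then obtain N' where N': "unimodular_equiv N N'" "\<forall>i\<in>S. cross_cleared i N'" "N' $ k $ k \<noteq> 0"
      "pivot_measure k N' < pivot_measure k N"
      using reduce_row_entry[OF less.prems] reduce_col_entry[OF less.prems] by blast
    then obtain N'' where "unimodular_equiv N' N''" "\<forall>i\<in>insert k S. cross_cleared i N''"
      using less.hyps[OF N'(4) N'(2) less.prems(2) N'(3)] by blast
    then show ?thesis
      using unimodular_equiv_trans[OF N'(1)] by blast
  qed
qed

lemma clear_cross_via_row_entry:
  fixes N :: "int^'n::finite^'n"
  assumes S: "\<forall>i\<in>S. cross_cleared i N" and k: "k \<notin> S" and j: "j \<noteq> k" "N $ k $ j \<noteq> 0"
  shows "\<exists>N'. unimodular_equiv N N' \<and> (\<forall>i\<in>insert k S. cross_cleared i N')"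
proof -
  have "j \<notin> S"
    using S j unfolding cross_cleared_def by auto
  then have "\<forall>i\<in>S. cross_cleared i (N ** swap_matrix j k)"
    using S k by (metis cross_cleared_mult_swap_matrix)
  moreover have "(N ** swap_matrix j k) $ k $ k \<noteq> 0"
    using j(2) by (simp add: matrix_mul_swap_matrix)
  ultimately obtain N' where "unimodular_equiv (N ** swap_matrix j k) N'"
    and "\<forall>i\<in>insert k S. cross_cleared i N'"
    using clear_cross_nonzero_pivot[OF _ k] by blast
  then show ?thesis
    using unimodular_equiv_trans[OF unimodular_equiv_mult_right[OF invertible_swap_matrix]] by blast
qed

lemma clear_cross:
  fixes N :: "int^'n::finite^'n"
  assumes S: "\<forall>i\<in>S. cross_cleared i N" and k: "k \<notin> S"
  shows "\<exists>N'. unimodular_equiv N N' \<and> (\<forall>i\<in>insert k S. cross_cleared i N')"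
proof (cases "N $ k $ k \<noteq> 0 \<or> cross_cleared k N")
  case True
  then show ?thesis
    using clear_cross_nonzero_pivot[OF S k] S unimodular_equiv_refl by blast
next
  case False
  then obtain j where j: "j \<noteq> k" "N $ k $ j \<noteq> 0 \<or> N $ j $ k \<noteq> 0"
    unfolding cross_cleared_def by blast
  show ?thesis
  proof (cases "N $ k $ j = 0")
    case True
    have "\<forall>i\<in>S. cross_cleared i (transpose N)" "transpose N $ k $ j \<noteq> 0"
      using S True j(2) by (simp_all add: cross_cleared_transpose) (simp add: transpose_def)
    then obtain N' where "unimodular_equiv (transpose N) N'" "\<forall>i\<in>insert k S. cross_cleared i N'"
      using clear_cross_via_row_entry[OF _ k j(1)] by blast
    then show ?thesis
      using unimodular_equiv_transpose[of "transpose N" N']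
      by (intro exI[of _ "transpose N'"]) (simp add: cross_cleared_transpose)
  qed (use clear_cross_via_row_entry[OF S k j(1)] in blast)
qed

lemma unimodular_diagonalization:
  fixes M :: "int^'n::finite^'n"
  obtains P Q :: "int^'n^'n" where "invertible P" "invertible Q" "\<And>i j. i \<noteq> j \<Longrightarrow> (P ** M ** Q) $ i $ j = 0"
proof -
  have "\<exists>N. unimodular_equiv M N \<and> (\<forall>i\<in>S. cross_cleared i N)" if "finite S" for S
    using that
  proof (induction S rule: finite_induct)
    case empty
    then show ?case using unimodular_equiv_refl by blast
  next
    case (insert k S)
    then obtain N where N: "unimodular_equiv M N" "\<forall>i\<in>S. cross_cleared i N"
      by blast
    then obtain N' where "unimodular_equiv N N'" "\<forall>i\<in>insert k S. cross_cleared i N'"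
      using clear_cross insert.hyps(2) by blast
    then show ?case
      using unimodular_equiv_trans[OF N(1)] by blast
  qed
  from this[of UNIV] obtain N where "unimodular_equiv M N" "\<forall>i. cross_cleared i N"
    by auto
  then obtain P Q where "invertible P" "invertible Q" "N = P ** M ** Q"
    unfolding unimodular_equiv_def by blast
  with \<open>\<forall>i. cross_cleared i N\<close> show ?thesis
    unfolding cross_cleared_def by (intro that[of P Q]) auto
qed

section \<open>Orbits of an involution and residues mod m\<close>

lemma card_orbits_involution:
  assumes fin: "finite R" and inv: "\<And>x. x \<in> R \<Longrightarrow> t x \<in> R" "\<And>x. x \<in> R \<Longrightarrow> t (t x) = x"
  shows "2 * card ((\<lambda>x. {x, t x}) ` R) = card R + card {x\<in>R. t x = x}"
proof -
  define K where "K = (\<lambda>x. {x, t x}) ` R"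
  have "finite K"
    unfolding K_def using fin by simp
  have "card R = (\<Sum>k\<in>K. card k)"
  proof -
    have "\<Union>K = R"
      unfolding K_def using inv by auto
    moreover have "pairwise disjnt K"
      unfolding K_def pairwise_def disjnt_def using inv by auto metis+
    moreover have "\<forall>k\<in>K. finite k"
      unfolding K_def by auto
    ultimately show ?thesis
      using card_Union_disjoint[of K] by simp
  qed
  moreover have "(\<Sum>k\<in>K. card k + (if card k = 1 then 1 else 0)) = (\<Sum>k\<in>K. 2)"
    by (rule sum.cong) (auto simp: K_def card_insert_if)
  moreover have "(\<Sum>k\<in>K. if card k = 1 then 1 else 0) = card {k\<in>K. card k = 1}"
    using \<open>finite K\<close> by (simp add: sum.If_cases Int_def)
  moreover have "card {k\<in>K. card k = 1} = card {x\<in>R. t x = x}"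
  proof -
    have "bij_betw (\<lambda>x. {x}) {x\<in>R. t x = x} {k\<in>K. card k = 1}"
      by (rule bij_betw_byWitness[where f'=the_elem])
        (auto simp: K_def card_insert_if image_iff split: if_splits)
    then show ?thesis
      by (simp add: bij_betw_same_card)
  qed
  ultimately show ?thesis
    unfolding K_def[symmetric] by (simp add: sum.distrib)
qed

lemma card_dvd_double_add_odd:
  fixes m c :: int
  assumes "m > 0" "odd m"
  shows "card {t\<in>{0..<m}. m dvd 2 * t + c} = 1"
proof -
  define t0 where "t0 = ((m - 1) div 2 * c) mod m"
  have t0: "t0 \<in> {0..<m}"
    unfolding t0_def using assms by simp
  have "2 * ((m - 1) div 2) = m - 1"
    using assms by simp
  then have "2 * ((m - 1) div 2 * c) + c = m * c"
    by (metis add.commute diff_add_cancel distrib_right mult.assoc mult_1)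
  moreover have "(2 * t0 + c) mod m = (2 * ((m - 1) div 2 * c) + c) mod m"
    unfolding t0_def by (metis mod_add_left_eq mod_mult_right_eq)
  ultimately have "m dvd 2 * t0 + c"
    by (simp add: mod_eq_0_iff_dvd[symmetric])
  moreover have "t = t0" if "t \<in> {0..<m}" "m dvd 2 * t + c" for t
  proof -
    have "m dvd 2 * (t - t0)"
      using dvd_diff[OF that(2) \<open>m dvd 2 * t0 + c\<close>] by (simp add: algebra_simps)
    moreover have "coprime m 2"
      using assms by simp
    ultimately have "m dvd t - t0"
      using coprime_dvd_mult_right_iff by blast
    then show ?thesis
      using that(1) t0 by (simp add: mod_eq_dvd_iff[symmetric])
  qed
  ultimately have "{t\<in>{0..<m}. m dvd 2 * t + c} = {t0}"
    using t0 by blast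
  then show ?thesis
    by simp
qed

lemma dvd_add_residues_two_periods:
  fixes h e :: int
  assumes "h > 0"
  shows "{t\<in>{0..<2 * h}. h dvd t + e} = {(- e) mod h, (- e) mod h + h}"
proof (intro set_eqI iffI)
  fix t
  assume "t \<in> {t\<in>{0..<2 * h}. h dvd t + e}"
  then have t: "0 \<le> t" "t < 2 * h" "h dvd t + e"
    by auto
  then have t_mod: "t mod h = (- e) mod h"
    by (simp add: mod_eq_dvd_iff)
  have "t div h < 2"
    using t assms by (smt (verit, ccfv_SIG) div_pos_geq div_pos_pos_trivial)
  moreover have "t div h \<ge> 0"
    using t assms by (simp add: pos_imp_zdiv_nonneg_iff)
  ultimately have "t div h = 0 \<or> t div h = 1"
    by linarith
  moreover have "t = h * (t div h) + t mod h"
    by simp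
  ultimately show "t \<in> {(- e) mod h, (- e) mod h + h}"
    using t_mod by auto
next
  fix t
  assume t: "t \<in> {(- e) mod h, (- e) mod h + h}"
  have "((- e) mod h + e) mod h = (- e + e) mod h"
    by (rule mod_add_left_eq)
  then have "h dvd (- e) mod h + e"
    by (simp add: dvd_eq_mod_eq_0)
  then have "h dvd t + e"
    using t dvd_add_right_iff[of h h "(- e) mod h + e"] by (auto simp: algebra_simps)
  moreover have "0 \<le> (- e) mod h" "(- e) mod h < h"
    using assms by simp_all
  ultimately show "t \<in> {t\<in>{0..<2 * h}. h dvd t + e}"
    using t by auto
qed

lemma card_dvd_double_add_even:
  fixes m c :: int
  assumes "m > 0" "even m"
  shows "card {t\<in>{0..<m}. m dvd 2 * t + c} = (if even c then 2 else 0)"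
proof (cases "even c")
  case False
  have "\<not> m dvd 2 * t + c" for t
  proof
    assume "m dvd 2 * t + c"
    then have "2 dvd 2 * t + c"
      using assms(2) dvd_trans by blast
    then show False
      using False by simp
  qed
  then show ?thesis
    using False by simp
next
  case True
  obtain h e where h: "m = 2 * h" and e: "c = 2 * e"
    using assms(2) True by blast
  have "h > 0"
    using h assms by simp
  have "m dvd 2 * t + c \<longleftrightarrow> h dvd t + e" for t
    unfolding h e by (metis distrib_left_numeral dvd_mult_cancel_left zero_neq_numeral)
  then have "{t\<in>{0..<m}. m dvd 2 * t + c} = {(- e) mod h, (- e) mod h + h}"
    unfolding h dvd_add_residues_two_periods[OF \<open>h > 0\<close>, symmetric] by simp
  then show ?thesis
    using True \<open>h > 0\<close> by simp
qed

text \<open>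
  The fixed points of \<open>t \<mapsto> -t - c\<close> on \<open>\<int>/a\<close> are counted by the solutions of \<open>a t \<equiv> c\<close> mod 2:
  both are \<open>1\<close> for odd \<open>a\<close>, and \<open>2\<close> or \<open>0\<close> according to the parity of \<open>c\<close> for even \<open>a\<close>.\<close>
lemma card_reflection_fixed_residues:
  fixes a c :: int
  assumes "a \<noteq> 0"
  shows "card {t\<in>{0..<\<bar>a\<bar>}. (- t - c) mod \<bar>a\<bar> = t} = card {t\<in>{0::int, 1}. (a * t) mod 2 = c mod 2}"
proof -
  have "(- t - c) mod \<bar>a\<bar> = t \<longleftrightarrow> \<bar>a\<bar> dvd 2 * t + c" if "t \<in> {0..<\<bar>a\<bar>}" for t
  proof -
    have "(- t - c) mod \<bar>a\<bar> = t \<longleftrightarrow> (- t - c) mod \<bar>a\<bar> = t mod \<bar>a\<bar>"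
      using that by simp
    also have "\<dots> \<longleftrightarrow> \<bar>a\<bar> dvd - (2 * t + c)"
      by (simp add: mod_eq_dvd_iff algebra_simps)
    finally show ?thesis
      by (simp only: dvd_minus_iff)
  qed
  then have lhs: "{t\<in>{0..<\<bar>a\<bar>}. (- t - c) mod \<bar>a\<bar> = t} = {t\<in>{0..<\<bar>a\<bar>}. \<bar>a\<bar> dvd 2 * t + c}"
    by blast
  show ?thesis
  proof (cases "even a")
    case True
    then have "{t\<in>{0::int, 1}. (a * t) mod 2 = c mod 2} = (if even c then {0, 1} else {})"
      by (auto simp: even_iff_mod_2_eq_zero)
    then show ?thesis
      unfolding lhs using card_dvd_double_add_even[of "\<bar>a\<bar>" c] True assms by simp
  next
    case False
    then have "{t\<in>{0::int, 1}. (a * t) mod 2 = c mod 2} = {c mod 2}"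
      by (auto simp: odd_iff_mod_2_eq_one mod_mult_left_eq[of a, symmetric])
    then show ?thesis
      unfolding lhs using card_dvd_double_add_odd[of "\<bar>a\<bar>" c] False assms by simp
  qed
qed

section \<open>Linear systems over Z/2\<close>

definition vec_mod2 :: "int^'n::finite \<Rightarrow> int^'n" where
  "vec_mod2 v = (\<chi> i. v $ i mod 2)"

definition parity_solutions :: "int^'n::finite^'m::finite \<Rightarrow> int^'m \<Rightarrow> (int^'n) set" where
  "parity_solutions B b = {x. (\<forall>i. x $ i \<in> {0, 1}) \<and> vec_mod2 (B *v x) = vec_mod2 b}"

lemma O_count_eq_card_parity_solutions: "O_count B b = card (parity_solutions B b)"
  unfolding O_count_def parity_solutions_def vec_mod2_def vec_eq_iff by simp

lemma vec_mod2_idem [simp]: "vec_mod2 (vec_mod2 x) = vec_mod2 x"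
  unfolding vec_mod2_def by simp

lemma vec_mod2_binary: "(\<forall>i. x $ i \<in> {0, 1}) \<Longrightarrow> vec_mod2 x = x"
  unfolding vec_mod2_def vec_eq_iff by (simp; metis mod_0 one_mod_two_eq_one)

lemma vec_mod2_nth_binary: "vec_mod2 x $ i \<in> {0, 1}"
  unfolding vec_mod2_def by (simp, presburger)

lemma vec_mod2_matrix_vector_mult_cong:
  fixes A A' :: "int^'n::finite^'m::finite"
  assumes "\<And>i j. A $ i $ j mod 2 = A' $ i $ j mod 2" and "vec_mod2 x = vec_mod2 y"
  shows "vec_mod2 (A *v x) = vec_mod2 (A' *v y)"
proof -
  have xy: "x $ j mod 2 = y $ j mod 2" for j
    using assms(2) unfolding vec_mod2_def vec_eq_iff by simp
  have "(\<Sum>j\<in>UNIV. A $ i $ j * x $ j) mod 2 = (\<Sum>j\<in>UNIV. A' $ i $ j * y $ j) mod 2" for i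
  proof -
    have "(\<Sum>j\<in>UNIV. A $ i $ j * x $ j) mod 2 = (\<Sum>j\<in>UNIV. (A $ i $ j * x $ j) mod 2) mod 2"
      by (simp add: mod_sum_eq)
    also have "\<dots> = (\<Sum>j\<in>UNIV. (A' $ i $ j * y $ j) mod 2) mod 2"
    proof -
      have "(A $ i $ j * x $ j) mod 2 = (A' $ i $ j * y $ j) mod 2" for j
        using mod_mult_eq[of "A $ i $ j" 2 "x $ j"] mod_mult_eq[of "A' $ i $ j" 2 "y $ j"]
        by (simp add: xy assms(1))
      then show ?thesis
        by simp
    qed
    also have "\<dots> = (\<Sum>j\<in>UNIV. A' $ i $ j * y $ j) mod 2"
      by (simp add: mod_sum_eq)
    finally show ?thesis .
  qed
  then show ?thesis
    unfolding vec_mod2_def matrix_vector_mult_def vec_eq_iff by simp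
qed

lemma vec_mod2_matrix_vector_mult:
  "vec_mod2 x = vec_mod2 y \<Longrightarrow> vec_mod2 (A *v x) = vec_mod2 (A *v y)"
  by (rule vec_mod2_matrix_vector_mult_cong) simp_all

lemma parity_solutions_cong:
  assumes "\<And>i j. B $ i $ j mod 2 = B' $ i $ j mod 2" and "vec_mod2 b = vec_mod2 b'"
  shows "parity_solutions B b = parity_solutions B' b'"
  unfolding parity_solutions_def
  using vec_mod2_matrix_vector_mult_cong[OF assms(1) refl] assms(2) by simp

lemma vec_mod2_mult_mem_parity_solutions:
  assumes "A ** Y = Z ** B" and "x \<in> parity_solutions B b"
  shows "vec_mod2 (Y *v x) \<in> parity_solutions A (Z *v b)"
proof -
  have "vec_mod2 (A *v vec_mod2 (Y *v x)) = vec_mod2 (Z *v (B *v x))"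
    using vec_mod2_matrix_vector_mult[OF vec_mod2_idem, of A "Y *v x"] assms(1)
    by (simp add: matrix_vector_mul_assoc)
  also have "\<dots> = vec_mod2 (Z *v b)"
    using assms(2) unfolding parity_solutions_def by (blast intro: vec_mod2_matrix_vector_mult)
  finally show ?thesis
    unfolding parity_solutions_def using vec_mod2_nth_binary by blast
qed

lemma vec_mod2_mult_inverse:
  assumes "Y ** Y' = mat 1" and "\<forall>i. x $ i \<in> {0, 1}"
  shows "vec_mod2 (Y *v vec_mod2 (Y' *v x)) = x"
  using vec_mod2_matrix_vector_mult[OF vec_mod2_idem, of Y "Y' *v x"] assms
  by (simp add: matrix_vector_mul_assoc vec_mod2_binary)

lemma O_count_unimodular:
  fixes M P P' Q Q' :: "int^'n::finite^'n"
  assumes "P ** P' = mat 1" "P' ** P = mat 1" and "Q ** Q' = mat 1" "Q' ** Q = mat 1"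
  shows "O_count M c = O_count (P ** M ** Q) (P *v c)"
proof -
  let ?S = "parity_solutions M c" and ?T = "parity_solutions (P ** M ** Q) (P *v c)"
  have "(P ** M ** Q) ** Q' = P ** M"
    using assms(3) by (metis matrix_mul_assoc matrix_mul_rid)
  then have mem_T: "vec_mod2 (Q' *v x) \<in> ?T" if "x \<in> ?S" for x
    using vec_mod2_mult_mem_parity_solutions that by blast
  have "M ** Q = P' ** (P ** M ** Q)"
    using assms(2) by (metis matrix_mul_assoc matrix_mul_lid)
  moreover have "P' *v (P *v c) = c"
    using assms(2) by (simp add: matrix_vector_mul_assoc)
  ultimately have mem_S: "vec_mod2 (Q *v y) \<in> ?S" if "y \<in> ?T" for y
    using vec_mod2_mult_mem_parity_solutions[of M Q P' "P ** M ** Q" y "P *v c"] that by simp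
  have "bij_betw (\<lambda>x. vec_mod2 (Q' *v x)) ?S ?T"
    using mem_T mem_S vec_mod2_mult_inverse[OF assms(3)] vec_mod2_mult_inverse[OF assms(4)]
    by (intro bij_betw_byWitness[where f'="\<lambda>y. vec_mod2 (Q *v y)"]) (auto simp: parity_solutions_def)
  then show ?thesis
    unfolding O_count_eq_card_parity_solutions by (rule bij_betw_same_card)
qed

section \<open>The reflection x \<mapsto> -x - c on Z^n / M Z^n\<close>

definition reflected_coset_rel :: "int^'n::finite^'n \<Rightarrow> int^'n \<Rightarrow> int^'n \<Rightarrow> int^'n \<Rightarrow> bool" where
  "reflected_coset_rel M c z z' \<longleftrightarrow> (\<exists>w. z = z' + M *v w \<or> z = - z' - c + M *v w)"

lemma abs_det_unimodular:
  fixes P :: "int^'n::finite^'n"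
  assumes "P ** P' = mat 1"
  shows "\<bar>det P\<bar> = 1"
  using arg_cong[OF assms, of det] by (simp add: det_mul zmult_eq_1_iff) (metis abs_1 abs_neg_one)

lemma matrix_vector_mult_diagonal:
  fixes D :: "'a::semiring_1^'n::finite^'n"
  assumes "\<And>i j. i \<noteq> j \<Longrightarrow> D $ i $ j = 0"
  shows "(D *v u) $ i = D $ i $ i * u $ i"
proof -
  have "(D *v u) $ i = (\<Sum>j\<in>UNIV. D $ i $ j * u $ j)"
    by (simp add: matrix_vector_mult_def)
  also have "\<dots> = (\<Sum>j\<in>UNIV. if j = i then D $ i $ i * u $ i else 0)"
    by (rule sum.cong) (use assms in auto)
  finally show ?thesis
    by simp
qed

lemma bij_betw_vec_nth_PiE:
  "bij_betw (\<lambda>x i. x $ i) {x::'a^'n::finite. \<forall>i. x $ i \<in> A i} (PiE UNIV A)"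
  by (rule bij_betw_byWitness[where f'=vec_lambda]) (auto simp: PiE_iff)

lemma card_vec_box: "card {x::'a^'n::finite. \<forall>i. x $ i \<in> A i} = (\<Prod>i\<in>UNIV. card (A i))"
  using bij_betw_same_card[OF bij_betw_vec_nth_PiE] by (simp add: card_PiE)

lemma finite_vec_box:
  assumes "\<And>i. finite (A i)"
  shows "finite {x::'a^'n::finite. \<forall>i. x $ i \<in> A i}"
  using bij_betw_finite[OF bij_betw_vec_nth_PiE, of A] assms by (simp add: finite_PiE)

locale diagonalized =
  fixes M P P' Q Q' :: "int^'n::finite^'n"
  assumes P_inverse: "P ** P' = mat 1" "P' ** P = mat 1"
    and Q_inverse: "Q ** Q' = mat 1" "Q' ** Q = mat 1"
    and diagonal: "\<And>i j. i \<noteq> j \<Longrightarrow> (P ** M ** Q) $ i $ j = 0"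
begin

definition pivot :: "'n \<Rightarrow> int" where
  "pivot i = (P ** M ** Q) $ i $ i"

text \<open>Through \<open>z \<mapsto> P z\<close>, \<open>\<int>\<^sup>n / M \<int>\<^sup>n\<close> becomes the box of residues modulo the pivots.\<close>
definition residue :: "int^'n \<Rightarrow> int^'n" where
  "residue x = (\<chi> i. x $ i mod \<bar>pivot i\<bar>)"

definition reflect :: "int^'n \<Rightarrow> int^'n \<Rightarrow> int^'n" where
  "reflect c x = residue (- x - P *v c)"

definition coset_class :: "int^'n \<Rightarrow> int^'n \<Rightarrow> (int^'n) set" where
  "coset_class c z = {residue (P *v z), reflect c (residue (P *v z))}"

lemma abs_det_eq_abs_prod_pivot: "\<bar>det M\<bar> = \<bar>\<Prod>i\<in>UNIV. pivot i\<bar>"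
proof -
  have "det (P ** M ** Q) = (\<Prod>i\<in>UNIV. pivot i)"
    unfolding pivot_def by (rule det_diagonal) (use diagonal in auto)
  then have "\<bar>det P\<bar> * \<bar>det M\<bar> * \<bar>det Q\<bar> = \<bar>\<Prod>i\<in>UNIV. pivot i\<bar>"
    by (simp add: det_mul flip: abs_mult)
  then show ?thesis
    using abs_det_unimodular[OF P_inverse(1)] abs_det_unimodular[OF Q_inverse(1)] by simp
qed

lemma mem_range_iff: "(\<exists>w. v = M *v w) \<longleftrightarrow> (\<forall>i. pivot i dvd (P *v v) $ i)"
proof
  assume "\<exists>w. v = M *v w"
  then obtain w where "v = M *v w"
    by blast
  then have "P *v v = (P ** M ** Q) *v (Q' *v w)"
    using Q_inverse(1) by (simp add: matrix_vector_mul_assoc) (metis matrix_mul_assoc matrix_mul_rid)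
  then show "\<forall>i. pivot i dvd (P *v v) $ i"
    unfolding pivot_def by (simp add: matrix_vector_mult_diagonal[OF diagonal])
next
  assume "\<forall>i. pivot i dvd (P *v v) $ i"
  then obtain f where f: "\<And>i. (P *v v) $ i = pivot i * f i"
    unfolding dvd_def by metis
  then have "P *v v = (P ** M ** Q) *v (\<chi> i. f i)"
    unfolding pivot_def by (simp add: vec_eq_iff matrix_vector_mult_diagonal[OF diagonal])
  then have "P' *v (P *v v) = M *v (Q *v (\<chi> i. f i))"
    using P_inverse(2) by (simp add: matrix_vector_mul_assoc) (metis matrix_mul_assoc matrix_mul_lid)
  then have "v = M *v (Q *v (\<chi> i. f i))"
    using P_inverse(2) by (simp add: matrix_vector_mul_assoc)
  then show "\<exists>w. v = M *v w" ..
qed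

lemma residue_eq_iff: "residue x = residue y \<longleftrightarrow> (\<forall>i. pivot i dvd x $ i - y $ i)"
  unfolding residue_def vec_eq_iff by (simp add: mod_eq_dvd_iff)

lemma residue_residue [simp]: "residue (residue x) = residue x"
  unfolding residue_def by simp

lemma reflect_residue [simp]: "reflect c (residue x) = reflect c x"
  unfolding reflect_def residue_def vec_eq_iff by (simp add: mod_eq_dvd_iff)

lemma residue_reflect [simp]: "residue (reflect c x) = reflect c x"
  unfolding reflect_def by simp

lemma reflect_reflect: "reflect c (reflect c x) = residue x"
proof -
  have "reflect c (reflect c x) = reflect c (- x - P *v c)"
    by (subst (2) reflect_def) (rule reflect_residue)
  then show ?thesis
    by (simp add: reflect_def)
qed

lemma coset_class_eq_iff: "reflected_coset_rel M c z z' \<longleftrightarrow> coset_class c z = coset_class c z'"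
proof -
  define r r' where "r = residue (P *v z)" and "r' = residue (P *v z')"
  have involution: "reflect c (reflect c r) = r" "reflect c (reflect c r') = r'"
    unfolding r_def r'_def reflect_reflect by simp_all
  have reflect_r': "residue (- (P *v z') - P *v c) = reflect c r'"
    unfolding r'_def reflect_residue by (simp add: reflect_def)
  have "reflected_coset_rel M c z z' \<longleftrightarrow> (\<exists>w. z - z' = M *v w) \<or> (\<exists>w. z + z' + c = M *v w)"
    unfolding reflected_coset_rel_def by (auto simp: algebra_simps)
  also have "\<dots> \<longleftrightarrow> r = r' \<or> r = residue (- (P *v z') - P *v c)"
    unfolding mem_range_iff residue_eq_iff r_def r'_def
    by (simp add: matrix_vector_mult_diff_distrib matrix_vector_right_distrib algebra_simps)
  also have "\<dots> \<longleftrightarrow> r = r' \<or> r = reflect c r'"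
    by (simp only: reflect_r')
  also have "\<dots> \<longleftrightarrow> {r, reflect c r} = {r', reflect c r'}"
    using involution by (auto simp: doubleton_eq_iff)
  finally show ?thesis
    unfolding coset_class_def r_def r'_def .
qed

lemma range_coset_class: "range (coset_class c) = (\<lambda>x. {x, reflect c x}) ` range residue"
proof -
  have "surj ((*v) P)"
    using P_inverse(1) by (intro surjI[of _ "(*v) P'"]) (simp add: matrix_vector_mul_assoc)
  moreover have "coset_class c = (\<lambda>x. {x, reflect c x}) \<circ> residue \<circ> (*v) P"
    by (simp add: fun_eq_iff coset_class_def)
  ultimately show ?thesis
    by (simp only: image_comp[symmetric])
qed

lemma finite_range_coset_class_iff: "finite (range (coset_class c)) \<longleftrightarrow> finite (range residue)"
proof
  assume "finite (range (coset_class c))"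
  then have "finite (\<Union> (range (coset_class c)))"
    by (rule finite_Union) (auto simp: coset_class_def)
  moreover have "range residue \<subseteq> \<Union> (range (coset_class c))"
    unfolding range_coset_class by auto
  ultimately show "finite (range residue)"
    by (rule finite_subset[rotated])
qed (simp add: range_coset_class)

lemma infinite_range_residue:
  assumes "det M = 0"
  shows "infinite (range residue)"
proof -
  obtain j where "pivot j = 0"
    using assms abs_det_eq_abs_prod_pivot by auto
  then have "residue (\<chi> i. if i = j then t else 0) $ j = t" for t
    unfolding residue_def by simp
  then have "inj (\<lambda>t. residue (\<chi> i. if i = j then t else 0))"
    by (intro injI) metis
  then have "infinite (range (\<lambda>t. residue (\<chi> i. if i = j then t else 0)))"
    using infinite_UNIV_int finite_imageD by blast
  moreover have "range (\<lambda>t. residue (\<chi> i. if i = j then t else 0)) \<subseteq> range residue"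
    by auto
  ultimately show ?thesis
    using finite_subset by blast
qed

lemma nonzero_pivot:
  assumes "det M \<noteq> 0"
  shows "pivot i \<noteq> 0"
proof
  assume "pivot i = 0"
  then have "(\<Prod>i\<in>UNIV. pivot i) = 0"
    by (meson UNIV_I finite prod_zero_iff)
  then have "\<bar>det M\<bar> = 0"
    by (simp only: abs_det_eq_abs_prod_pivot abs_zero)
  then show False
    using assms by simp
qed

lemma range_residue:
  assumes "det M \<noteq> 0"
  shows "range residue = {x. \<forall>i. x $ i \<in> {0..<\<bar>pivot i\<bar>}}"
proof (intro equalityI subsetI)
  fix x
  assume "x \<in> range residue"
  then show "x \<in> {x. \<forall>i. x $ i \<in> {0..<\<bar>pivot i\<bar>}}"
    unfolding residue_def using nonzero_pivot[OF assms] by auto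
next
  fix x
  assume "x \<in> {x. \<forall>i. x $ i \<in> {0..<\<bar>pivot i\<bar>}}"
  then have "residue x = x"
    unfolding residue_def vec_eq_iff by simp
  then show "x \<in> range residue"
    by (metis rangeI)
qed

lemma card_range_residue:
  assumes "det M \<noteq> 0"
  shows "finite (range residue)" "card (range residue) = nat \<bar>det M\<bar>"
proof -
  show "finite (range residue)"
    unfolding range_residue[OF assms] by (rule finite_vec_box) simp
  have "int (card (range residue)) = (\<Prod>i\<in>UNIV. \<bar>pivot i\<bar>)"
    unfolding range_residue[OF assms] card_vec_box by simp
  then show "card (range residue) = nat \<bar>det M\<bar>"
    unfolding abs_det_eq_abs_prod_pivot by (simp add: abs_prod)
qed

lemma card_fixed_reflect:
  assumes "det M \<noteq> 0"
  shows "card {x \<in> range residue. reflect c x = x} = O_count M c"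
proof -
  have "O_count M c = O_count (P ** M ** Q) (P *v c)"
    using P_inverse Q_inverse by (rule O_count_unimodular)
  also have "\<dots> = card {x. \<forall>i. x $ i \<in> {t\<in>{0::int, 1}. (pivot i * t) mod 2 = (P *v c) $ i mod 2}}"
  proof -
    have "((P ** M ** Q) *v x) $ i = pivot i * x $ i" for x i
      unfolding pivot_def by (rule matrix_vector_mult_diagonal[OF diagonal])
    then show ?thesis
      unfolding O_count_def by (intro arg_cong[where f=card]) auto
  qed
  also have "\<dots> = card {x. \<forall>i. x $ i \<in> {t\<in>{0..<\<bar>pivot i\<bar>}. (- t - (P *v c) $ i) mod \<bar>pivot i\<bar> = t}}"
    unfolding card_vec_box using card_reflection_fixed_residues nonzero_pivot[OF assms] by simp
  also have "{x. \<forall>i. x $ i \<in> {t\<in>{0..<\<bar>pivot i\<bar>}. (- t - (P *v c) $ i) mod \<bar>pivot i\<bar> = t}} =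
      {x \<in> range residue. reflect c x = x}"
    unfolding range_residue[OF assms] reflect_def residue_def vec_eq_iff by auto
  finally show ?thesis ..
qed

lemma card_range_coset_class:
  assumes "det M \<noteq> 0"
  shows "2 * card (range (coset_class c)) = nat \<bar>det M\<bar> + O_count M c"
proof -
  have "2 * card ((\<lambda>x. {x, reflect c x}) ` range residue) =
      card (range residue) + card {x \<in> range residue. reflect c x = x}"
  proof (rule card_orbits_involution)
    show "reflect c x \<in> range residue" for x
      by (metis residue_reflect rangeI)
  qed (use card_range_residue(1)[OF assms] reflect_reflect in auto)
  then show ?thesis
    unfolding range_coset_class card_range_residue(2)[OF assms] card_fixed_reflect[OF assms] .
qed

end

lemma reflected_coset_classes:
  fixes M :: "int^'n::finite^'n" and c :: "int^'n"
  shows "\<exists>\<kappa> :: int^'n \<Rightarrow> (int^'n) set. (\<forall>z z'. reflected_coset_rel M c z z' \<longleftrightarrow> \<kappa> z = \<kappa> z') \<and>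
    (finite (range \<kappa>) \<longleftrightarrow> det M \<noteq> 0) \<and>
    (det M \<noteq> 0 \<longrightarrow> 2 * card (range \<kappa>) = nat \<bar>det M\<bar> + O_count M c)"
proof -
  obtain P Q :: "int^'n^'n" where "invertible P" "invertible Q"
    and diagonal: "\<And>i j. i \<noteq> j \<Longrightarrow> (P ** M ** Q) $ i $ j = 0"
    using unimodular_diagonalization[of M] by blast
  then obtain P' Q' where "P ** P' = mat 1" "P' ** P = mat 1" "Q ** Q' = mat 1" "Q' ** Q = mat 1"
    unfolding invertible_def by blast
  then interpret diagonalized M P P' Q Q'
    using diagonal by unfold_locales
  show ?thesis
    using coset_class_eq_iff finite_range_coset_class_iff infinite_range_residue
      card_range_residue(1) card_range_coset_class
    by (intro exI[of _ "coset_class c"]) blast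
qed

section \<open>The group Gamma and the twisted conjugacy classes of xi (d, D)\<close>

lemma card_mat_1_uminus_mat_1: "card {mat 1, - mat 1 :: real^'n::finite^'n} = 2"
proof -
  obtain i :: 'n where True
    by blast
  have "(mat 1 :: real^'n^'n) $ i $ i \<noteq> (- mat 1 :: real^'n^'n) $ i $ i"
    by (simp add: mat_def)
  then have "(mat 1 :: real^'n^'n) \<noteq> - mat 1"
    by metis
  then show ?thesis
    by (metis card_2_iff)
qed

definition real_vec :: "int^'n::finite \<Rightarrow> real^'n" where
  "real_vec z = (\<chi> i. of_int (z $ i))"

definition int_vec :: "real^'n::finite \<Rightarrow> int^'n" where
  "int_vec x = (\<chi> i. \<lfloor>x $ i\<rfloor>)"

definition int_mat :: "real^'n::finite^'m::finite \<Rightarrow> int^'n^'m" where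
  "int_mat X = (\<chi> i j. \<lfloor>X $ i $ j\<rfloor>)"

definition holonomy_matrix :: "real^'n::finite^'n \<Rightarrow> real^'n^'n \<Rightarrow> int^'n^'n" where
  "holonomy_matrix D A = int_mat (mat 1 - A ** D)"

definition holonomy_shift :: "real^'n::finite \<Rightarrow> real^'n^'n \<Rightarrow> int^'n" where
  "holonomy_shift d A = int_vec (A *v (d + d))"

lemma real_vec_add: "real_vec (x + y) = real_vec x + real_vec y"
  and real_vec_diff: "real_vec (x - y) = real_vec x - real_vec y"
  and real_vec_uminus: "real_vec (- x) = - real_vec x"
  and real_vec_zero: "real_vec 0 = 0"
  unfolding real_vec_def by (simp_all add: vec_eq_iff)

lemma real_vec_eq_iff: "real_vec x = real_vec y \<longleftrightarrow> x = y"
  unfolding real_vec_def by (simp add: vec_eq_iff)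

lemma int_vec_real_vec [simp]: "int_vec (real_vec x) = x"
  unfolding real_vec_def int_vec_def by (simp add: vec_eq_iff)

lemma real_vec_int_vec: "(\<And>i. x $ i \<in> \<int>) \<Longrightarrow> real_vec (int_vec x) = x"
  unfolding real_vec_def int_vec_def vec_eq_iff by simp

lemma real_vec_nth_Ints: "real_vec z $ i \<in> \<int>"
  unfolding real_vec_def by simp

lemma matrix_vector_mult_real_vec:
  assumes "\<And>i j. X $ i $ j \<in> \<int>"
  shows "X *v real_vec w = real_vec (int_mat X *v w)"
  using assms unfolding real_vec_def int_mat_def matrix_vector_mult_def
  by (simp add: vec_eq_iff)

lemma det_int_mat:
  assumes "\<And>i j. X $ i $ j \<in> \<int>"
  shows "det X = of_int (det (int_mat X))"
  using assms unfolding det_def int_mat_def by (simp add: of_int_sum of_int_prod)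

lemma aff_mult_holonomy:
  assumes "A \<in> {mat 1, - mat 1}"
  shows "aff_mult (real_vec z, A) (real_vec w, B) = (real_vec (z + (if A = mat 1 then w else - w)), A ** B)"
  using assms unfolding aff_mult_def
  by (auto simp: real_vec_add real_vec_uminus matrix_vector_mult_uminus_left)

lemma aff_inv_holonomy:
  assumes "A \<in> {mat 1, - mat 1}"
  shows "aff_inv (real_vec z, A) = (real_vec (if A = mat 1 then - z else z), A)"
  using assms unfolding aff_inv_def
  by (auto simp: matrix_inv_mat_1 matrix_inv_uminus_mat_1 real_vec_uminus matrix_vector_mult_uminus_left)

lemma Gamma_eq: "Gamma = {(real_vec z, A) | z A. A \<in> {mat 1, - mat 1}}"
proof (intro equalityI subsetI)
  fix g :: "'n::finite aff"
  assume "g \<in> Gamma"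
  then show "g \<in> {(real_vec z, A) | z A. A \<in> {mat 1, - mat 1}}"
  proof (induction rule: Gamma.induct)
    case (transl z)
    then show ?case
      using real_vec_int_vec[of z] by (metis (mono_tags, lifting) insertI1 mem_Collect_eq)
  next
    case minus
    have "(0 :: real^'n, - mat 1 :: real^'n^'n) = (real_vec 0, - mat 1)"
      by (simp add: real_vec_zero)
    then show ?case
      by blast
  next
    case (mult g h)
    then obtain z A w B where "g = (real_vec z, A)" "A \<in> {mat 1, - mat 1}"
      and "h = (real_vec w, B)" "B \<in> {mat 1, - mat 1}"
      by blast
    moreover have "A ** B \<in> {mat 1, - mat 1}"
      using \<open>A \<in> _\<close> \<open>B \<in> _\<close> by (auto simp: matrix_mul_uminus_left matrix_mul_uminus_right)
    ultimately show ?case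
      using aff_mult_holonomy by blast
  next
    case (inv g)
    then show ?case
      using aff_inv_holonomy by blast
  qed
next
  fix g :: "'n::finite aff"
  assume "g \<in> {(real_vec z, A) | z A. A \<in> {mat 1, - mat 1}}"
  then obtain z A where g: "g = (real_vec z, A)" "A \<in> {mat 1, - mat 1}"
    by blast
  have translation: "(real_vec z, mat 1) \<in> Gamma"
    by (rule Gamma.transl) (simp add: real_vec_nth_Ints)
  moreover have "aff_mult (real_vec z, mat 1) (0, - mat 1) = (real_vec z, - mat 1)"
    unfolding aff_mult_def by simp
  then have "(real_vec z, - mat 1) \<in> Gamma"
    using Gamma.mult[OF translation Gamma.minus] by simp
  ultimately show "g \<in> Gamma"
    using g by auto
qed

lemma xi_translation:
  assumes "invertible D"
  shows "xi (d, D) (w, mat 1) = (D *v w, mat 1)"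
proof -
  obtain D' where "D ** D' = mat 1" "D' ** D = mat 1"
    using assms unfolding invertible_def by blast
  then have "matrix_inv D = D'" "D *v (D' *v d) = d"
    by (simp_all add: matrix_inv_unique matrix_vector_mul_assoc)
  with \<open>D ** D' = mat 1\<close> show ?thesis
    unfolding xi_def aff_inv_def aff_mult_def by (simp add: matrix_vector_mult_uminus_right)
qed

lemma xi_reflection:
  assumes "invertible D"
  shows "xi (d, D) (w, - mat 1) = (D *v w + (d + d), - mat 1)"
proof -
  obtain D' where "D ** D' = mat 1" "D' ** D = mat 1"
    using assms unfolding invertible_def by blast
  then have "matrix_inv D = D'" "D *v (D' *v d) = d"
    by (simp_all add: matrix_inv_unique matrix_vector_mul_assoc)
  with \<open>D ** D' = mat 1\<close> show ?thesis
    unfolding xi_def aff_inv_def aff_mult_def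
    by (simp add: matrix_vector_mult_uminus_right matrix_mul_uminus_left matrix_mul_uminus_right matrix_vector_mult_uminus_left)
qed

lemma twisted_conj_translation:
  assumes "invertible D"
  shows "aff_mult (aff_mult (w, mat 1) (z, A)) (aff_inv (xi (d, D) (w, mat 1))) =
    (z + (mat 1 - A ** D) *v w, A)"
  unfolding xi_translation[OF assms] aff_inv_def aff_mult_def
  by (simp add: matrix_inv_mat_1 matrix_vector_mult_diff_rdistrib matrix_vector_mul_assoc matrix_vector_mult_uminus_right)

lemma twisted_conj_reflection:
  assumes "invertible D"
  shows "aff_mult (aff_mult (w, - mat 1) (z, A)) (aff_inv (xi (d, D) (w, - mat 1))) =
    (- z - A *v (d + d) + (mat 1 - A ** D) *v w, A)"
  unfolding xi_reflection[OF assms] aff_inv_def aff_mult_def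
  by (simp add: matrix_inv_uminus_mat_1 matrix_vector_mult_diff_rdistrib matrix_vector_mul_assoc matrix_vector_mult_uminus_right
      matrix_mul_uminus_left matrix_mul_uminus_right matrix_vector_mult_uminus_left vec.add)

lemma Ints_mat_1_minus_holonomy:
  fixes D :: "real^'n::finite^'n"
  assumes "A \<in> {mat 1, - mat 1}" and "\<And>i j. D $ i $ j \<in> \<int>"
  shows "(mat 1 - A ** D) $ i $ j \<in> \<int>"
proof -
  have "A ** D = D \<or> A ** D = - D"
    using assms(1) by (auto simp: matrix_mul_uminus_left)
  moreover have "mat 1 $ i $ j \<in> (\<int> :: real set)"
    by (simp add: mat_def)
  ultimately show ?thesis
    using assms(2) by (auto intro!: Ints_diff Ints_add)
qed

lemma Ints_holonomy_shift:
  fixes d :: "real^'n::finite"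
  assumes "A \<in> {mat 1, - mat 1}" and "\<And>i. 2 * d $ i \<in> \<int>"
  shows "(A *v (d + d)) $ i \<in> \<int>"
proof -
  have "A *v (d + d) = d + d \<or> A *v (d + d) = - (d + d)"
    using assms(1) by (auto simp: matrix_vector_mult_uminus_left)
  moreover have "(d + d) $ i = 2 * d $ i"
    by simp
  ultimately show ?thesis
    using assms(2) by (auto intro!: Ints_minus)
qed

lemma det_holonomy_matrix:
  assumes "A \<in> {mat 1, - mat 1}" and "\<And>i j. D $ i $ j \<in> \<int>"
  shows "det (mat 1 - A ** D) = of_int (det (holonomy_matrix D A))"
  unfolding holonomy_matrix_def using Ints_mat_1_minus_holonomy[OF assms] by (rule det_int_mat)

lemma twisted_conj_Gamma:
  fixes D :: "real^'n::finite^'n"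
  assumes "invertible D" and "\<And>i j. D $ i $ j \<in> \<int>" and "\<And>i. 2 * d $ i \<in> \<int>"
    and "A \<in> {mat 1, - mat 1}"
  shows "aff_mult (aff_mult (real_vec w, mat 1) (real_vec z, A)) (aff_inv (xi (d, D) (real_vec w, mat 1))) =
      (real_vec (z + holonomy_matrix D A *v w), A)"
    and "aff_mult (aff_mult (real_vec w, - mat 1) (real_vec z, A)) (aff_inv (xi (d, D) (real_vec w, - mat 1))) =
      (real_vec (- z - holonomy_shift d A + holonomy_matrix D A *v w), A)"
proof -
  have "(mat 1 - A ** D) *v real_vec w = real_vec (holonomy_matrix D A *v w)"
    unfolding holonomy_matrix_def using Ints_mat_1_minus_holonomy[OF assms(4,2)]
    by (rule matrix_vector_mult_real_vec)
  moreover have "A *v (d + d) = real_vec (holonomy_shift d A)"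
    unfolding holonomy_shift_def using Ints_holonomy_shift[OF assms(4,3)] by (simp add: real_vec_int_vec)
  ultimately show
    "aff_mult (aff_mult (real_vec w, mat 1) (real_vec z, A)) (aff_inv (xi (d, D) (real_vec w, mat 1))) =
      (real_vec (z + holonomy_matrix D A *v w), A)"
    "aff_mult (aff_mult (real_vec w, - mat 1) (real_vec z, A)) (aff_inv (xi (d, D) (real_vec w, - mat 1))) =
      (real_vec (- z - holonomy_shift d A + holonomy_matrix D A *v w), A)"
    unfolding twisted_conj_translation[OF assms(1)] twisted_conj_reflection[OF assms(1)]
      real_vec_add real_vec_diff real_vec_uminus by simp_all
qed

lemma twisted_rel_Gamma_iff:
  fixes D :: "real^'n::finite^'n"
  assumes "invertible D" and "\<And>i j. D $ i $ j \<in> \<int>" and "\<And>i. 2 * d $ i \<in> \<int>"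
    and "A \<in> {mat 1, - mat 1}" "A' \<in> {mat 1, - mat 1}"
  shows "((real_vec z, A), (real_vec z', A')) \<in> twisted_rel (xi (d, D)) \<longleftrightarrow>
    A = A' \<and> reflected_coset_rel (holonomy_matrix D A') (holonomy_shift d A') z z'"
    (is "_ \<longleftrightarrow> _ \<and> reflected_coset_rel ?M ?c z z'")
proof -
  have "(real_vec z, A) \<in> Gamma" "(real_vec z', A') \<in> Gamma"
    unfolding Gamma_eq using assms(4,5) by blast+
  then have "((real_vec z, A), (real_vec z', A')) \<in> twisted_rel (xi (d, D)) \<longleftrightarrow>
      (\<exists>h\<in>Gamma. (real_vec z, A) = aff_mult (aff_mult h (real_vec z', A')) (aff_inv (xi (d, D) h)))"
    unfolding twisted_rel_def by simp
  also have "\<dots> \<longleftrightarrow> (\<exists>w B. B \<in> {mat 1, - mat 1} \<and>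
      (real_vec z, A) = aff_mult (aff_mult (real_vec w, B) (real_vec z', A')) (aff_inv (xi (d, D) (real_vec w, B))))"
    unfolding Gamma_eq by blast
  also have "\<dots> \<longleftrightarrow> (\<exists>w. (real_vec z, A) = (real_vec (z' + ?M *v w), A') \<or>
      (real_vec z, A) = (real_vec (- z' - ?c + ?M *v w), A'))"
  proof -
    have ex_holonomy: "(\<exists>w B. B \<in> {mat 1, - mat 1} \<and> P w B) \<longleftrightarrow> (\<exists>w. P w (mat 1) \<or> P w (- mat 1))" for P
      by blast
    show ?thesis
      by (simp only: ex_holonomy twisted_conj_Gamma[OF assms(1-3,5)])
  qed
  also have "\<dots> \<longleftrightarrow> A = A' \<and> reflected_coset_rel ?M ?c z z'"
    unfolding reflected_coset_rel_def by (auto simp: real_vec_eq_iff)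
  finally show ?thesis .
qed

lemma bij_betw_quotient_invariant:
  assumes r: "\<And>x y. (x, y) \<in> r \<longleftrightarrow> x \<in> X \<and> y \<in> X \<and> K x = K y"
  shows "bij_betw (\<lambda>k. {y\<in>X. K y = k}) (K ` X) (X // r)"
proof -
  have "inj_on (\<lambda>k. {y\<in>X. K y = k}) (K ` X)"
    by (rule inj_onI) blast
  moreover have "r `` {x} = {y\<in>X. K y = K x}" if "x \<in> X" for x
    using r that by (auto simp: Image_def)
  then have "X // r = (\<lambda>k. {y\<in>X. K y = k}) ` (K ` X)"
    unfolding quotient_def by (auto simp: image_image)
  ultimately show ?thesis
    unfolding bij_betw_def by simp
qed

lemma finite_Sigma_iff:
  assumes "finite A"
  shows "finite (Sigma A B) \<longleftrightarrow> (\<forall>a\<in>A. finite (B a))"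
proof
  assume "finite (Sigma A B)"
  moreover have "B a = snd ` (Sigma A B \<inter> {a} \<times> UNIV)" if "a \<in> A" for a
    using that by force
  ultimately show "\<forall>a\<in>A. finite (B a)"
    by (metis finite_Int finite_imageI)
qed (use assms in \<open>auto intro: finite_SigmaI\<close>)

lemma reidemeister_Gamma_eq_sum_card:
  fixes \<phi> :: "'n::finite aff \<Rightarrow> 'n aff" and \<kappa> :: "real^'n^'n \<Rightarrow> int^'n \<Rightarrow> 'a"
  assumes rel: "\<And>z z' A A'. A \<in> {mat 1, - mat 1} \<Longrightarrow> A' \<in> {mat 1, - mat 1} \<Longrightarrow>
      ((real_vec z, A), (real_vec z', A')) \<in> twisted_rel \<phi> \<longleftrightarrow> A = A' \<and> \<kappa> A z = \<kappa> A z'"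
  shows "reidemeister \<phi> = (if \<forall>A\<in>{mat 1, - mat 1}. finite (range (\<kappa> A))
      then ereal (\<Sum>A\<in>{mat 1, - mat 1}. card (range (\<kappa> A))) else \<infinity>)"
proof -
  let ?H = "{mat 1, - mat 1} :: (real^'n^'n) set"
  define K where "K g = (snd g, \<kappa> (snd g) (int_vec (fst g)))" for g :: "'n aff"
  have "(g, g') \<in> twisted_rel \<phi> \<longleftrightarrow> g \<in> Gamma \<and> g' \<in> Gamma \<and> K g = K g'" for g g'
  proof (cases "g \<in> Gamma \<and> g' \<in> Gamma")
    case True
    then obtain z A z' A' where g: "g = (real_vec z, A)" "A \<in> ?H" and g': "g' = (real_vec z', A')" "A' \<in> ?H"
      unfolding Gamma_eq by blast
    have "K g = K g' \<longleftrightarrow> A = A' \<and> \<kappa> A z = \<kappa> A z'"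
      unfolding K_def g(1) g'(1) by auto
    then show ?thesis
      using rel[OF g(2) g'(2)] True unfolding g(1) g'(1) by simp
  qed (auto simp: twisted_rel_def)
  then have bij: "bij_betw (\<lambda>k. {y\<in>Gamma. K y = k}) (K ` Gamma) (Gamma // twisted_rel \<phi>)"
    by (rule bij_betw_quotient_invariant)
  have "K ` Gamma = Sigma ?H (\<lambda>A. range (\<kappa> A))"
  proof (intro equalityI subsetI)
    fix k
    assume "k \<in> K ` Gamma"
    then show "k \<in> Sigma ?H (\<lambda>A. range (\<kappa> A))"
      unfolding K_def Gamma_eq by auto
  next
    fix k
    assume "k \<in> Sigma ?H (\<lambda>A. range (\<kappa> A))"
    then obtain A z where "A \<in> ?H" "k = (A, \<kappa> A z)"
      by blast
    moreover from this(1) have "(real_vec z, A) \<in> Gamma"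
      unfolding Gamma_eq by blast
    ultimately show "k \<in> K ` Gamma"
      unfolding K_def by (auto intro: image_eqI[where x="(real_vec z, A)"])
  qed
  then show ?thesis
    unfolding reidemeister_def bij_betw_finite[OF bij, symmetric] bij_betw_same_card[OF bij, symmetric]
    by (simp add: finite_Sigma_iff card_SigmaI)
qed

lemma ereal_half_sum_abs_inf:
  fixes \<delta> :: "'a \<Rightarrow> int" and K :: "'a \<Rightarrow> 'b set"
  assumes "card H = 2"
    and fin: "\<And>A. A \<in> H \<Longrightarrow> finite (K A) \<longleftrightarrow> \<delta> A \<noteq> 0"
    and count: "\<And>A. A \<in> H \<Longrightarrow> \<delta> A \<noteq> 0 \<Longrightarrow> 2 * card (K A) = nat \<bar>\<delta> A\<bar> + N"
  shows "(if \<forall>A\<in>H. finite (K A) then ereal (\<Sum>A\<in>H. card (K A)) else \<infinity>) =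
    ereal (1/2) * (\<Sum>A\<in>H. abs_inf (of_int (\<delta> A))) + ereal N"
proof -
  have "finite H"
    by (rule card_ge_0_finite) (simp add: assms(1))
  show ?thesis
  proof (cases "\<forall>A\<in>H. \<delta> A \<noteq> 0")
    case True
    have "2 * real (card (K A)) = \<bar>real_of_int (\<delta> A)\<bar> + real N" if "A \<in> H" for A
      using arg_cong[OF count[OF that True[rule_format, OF that]], of real] by simp
    then have "2 * (\<Sum>A\<in>H. real (card (K A))) = (\<Sum>A\<in>H. \<bar>real_of_int (\<delta> A)\<bar>) + 2 * real N"
      using assms(1) by (simp add: sum_distrib_left sum.distrib)
    then show ?thesis
      using True fin by (simp add: abs_inf_def)
  next
    case False
    then obtain A where "A \<in> H" "\<delta> A = 0"
      by blast
    then have "(\<Sum>A\<in>H. abs_inf (of_int (\<delta> A))) = \<infinity>"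
      using \<open>finite H\<close> by (auto simp: sum_Pinfty abs_inf_def)
    then show ?thesis
      using False fin by auto
  qed
qed

lemma floor_add_mod_2_eq_floor_diff_mod_2:
  assumes "x \<in> \<int>" "y \<in> \<int>"
  shows "\<lfloor>x + y\<rfloor> mod 2 = \<lfloor>x - y\<rfloor> mod 2"
proof -
  obtain a b where "x = of_int a" "y = of_int b"
    using assms by (elim Ints_cases)
  moreover have "(a + b) mod 2 = (a - b) mod 2"
    by presburger
  ultimately show ?thesis
    by (simp flip: of_int_add of_int_diff)
qed

lemma floor_uminus_mod_2:
  assumes "x \<in> \<int>"
  shows "\<lfloor>- x\<rfloor> mod 2 = \<lfloor>x\<rfloor> mod 2"
proof -
  obtain a where "x = of_int a"
    using assms by (elim Ints_cases)
  moreover have "- a mod 2 = a mod 2"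
    by presburger
  ultimately show ?thesis
    by (simp flip: of_int_minus)
qed

lemma O_count_holonomy_independent:
  fixes D :: "real^'n::finite^'n"
  assumes "A \<in> {mat 1, - mat 1}" and "\<And>i j. D $ i $ j \<in> \<int>" and "\<And>i. 2 * d $ i \<in> \<int>"
  shows "O_count (holonomy_matrix D A) (holonomy_shift d A) =
    O_count (\<chi> i j. \<lfloor>(mat 1 - D) $ i $ j\<rfloor>) (\<chi> i. \<lfloor>2 * d $ i\<rfloor>)"
proof -
  have "O_count (holonomy_matrix D A) (holonomy_shift d A) =
      O_count (holonomy_matrix D (mat 1)) (holonomy_shift d (mat 1))"
  proof (cases "A = mat 1")
    case False
    then have A: "A = - mat 1"
      using assms(1) by simp
    have "mat 1 $ i $ j \<in> (\<int> :: real set)" for i j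
      by (simp add: mat_def)
    then have "\<lfloor>mat 1 $ i $ j + D $ i $ j\<rfloor> mod 2 = \<lfloor>mat 1 $ i $ j - D $ i $ j\<rfloor> mod 2" for i j
      using assms(2) by (rule floor_add_mod_2_eq_floor_diff_mod_2)
    moreover have "\<lfloor>- (2 * d $ i)\<rfloor> mod 2 = \<lfloor>2 * d $ i\<rfloor> mod 2" for i
      using assms(3) by (rule floor_uminus_mod_2)
    ultimately show ?thesis
      unfolding A O_count_eq_card_parity_solutions holonomy_matrix_def holonomy_shift_def
      by (intro arg_cong[where f=card] parity_solutions_cong)
        (simp_all add: int_mat_def int_vec_def vec_mod2_def vec_eq_iff
          matrix_mul_uminus_left matrix_vector_mult_uminus_left)
  qed simp
  also have "holonomy_matrix D (mat 1) = (\<chi> i j. \<lfloor>(mat 1 - D) $ i $ j\<rfloor>)"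
    unfolding holonomy_matrix_def int_mat_def by simp
  also have "holonomy_shift d (mat 1) = (\<chi> i. \<lfloor>2 * d $ i\<rfloor>)"
    unfolding holonomy_shift_def int_vec_def by (simp add: vec_eq_iff)
  finally show ?thesis .
qed

lemma reflected_coset_class_family:
  fixes M :: "'a \<Rightarrow> int^'n::finite^'n" and c :: "'a \<Rightarrow> int^'n"
  obtains \<kappa> :: "'a \<Rightarrow> int^'n \<Rightarrow> (int^'n) set"
  where "\<And>A z z'. reflected_coset_rel (M A) (c A) z z' \<longleftrightarrow> \<kappa> A z = \<kappa> A z'"
    and "\<And>A. finite (range (\<kappa> A)) \<longleftrightarrow> det (M A) \<noteq> 0"
    and "\<And>A. det (M A) \<noteq> 0 \<Longrightarrow> 2 * card (range (\<kappa> A)) = nat \<bar>det (M A)\<bar> + O_count (M A) (c A)"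
proof -
  have "\<exists>\<kappa> :: int^'n \<Rightarrow> (int^'n) set. (\<forall>z z'. reflected_coset_rel (M A) (c A) z z' \<longleftrightarrow> \<kappa> z = \<kappa> z') \<and>
      (finite (range \<kappa>) \<longleftrightarrow> det (M A) \<noteq> 0) \<and>
      (det (M A) \<noteq> 0 \<longrightarrow> 2 * card (range \<kappa>) = nat \<bar>det (M A)\<bar> + O_count (M A) (c A))" for A
    by (rule reflected_coset_classes)
  then have "\<forall>A. \<exists>\<kappa> :: int^'n \<Rightarrow> (int^'n) set.
      (\<forall>z z'. reflected_coset_rel (M A) (c A) z z' \<longleftrightarrow> \<kappa> z = \<kappa> z') \<and>
      (finite (range \<kappa>) \<longleftrightarrow> det (M A) \<noteq> 0) \<and>
      (det (M A) \<noteq> 0 \<longrightarrow> 2 * card (range \<kappa>) = nat \<bar>det (M A)\<bar> + O_count (M A) (c A))"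
    by (rule allI)
  from choice[OF this] obtain \<kappa> :: "'a \<Rightarrow> int^'n \<Rightarrow> (int^'n) set" where \<kappa>: "\<forall>A.
      (\<forall>z z'. reflected_coset_rel (M A) (c A) z z' \<longleftrightarrow> \<kappa> A z = \<kappa> A z') \<and>
      (finite (range (\<kappa> A)) \<longleftrightarrow> det (M A) \<noteq> 0) \<and>
      (det (M A) \<noteq> 0 \<longrightarrow> 2 * card (range (\<kappa> A)) = nat \<bar>det (M A)\<bar> + O_count (M A) (c A))"
    ..
  show ?thesis
    by (rule that[of \<kappa>]) (use \<kappa> in blast)+
qed

lemma reidemeister_xi_eq_sum_card:
  fixes D :: "real^'n::finite^'n"
  assumes "invertible D" and "\<And>i j. D $ i $ j \<in> \<int>" and "\<And>i. 2 * d $ i \<in> \<int>"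
    and rel: "\<And>A z z'. reflected_coset_rel (holonomy_matrix D A) (holonomy_shift d A) z z' \<longleftrightarrow> \<kappa> A z = \<kappa> A z'"
  shows "reidemeister (xi (d, D)) = (if \<forall>A\<in>{mat 1, - mat 1}. finite (range (\<kappa> A))
      then ereal (\<Sum>A\<in>{mat 1, - mat 1}. card (range (\<kappa> A))) else \<infinity>)"
proof (rule reidemeister_Gamma_eq_sum_card)
  fix z z' and A A' :: "real^'n^'n"
  assume "A \<in> {mat 1, - mat 1}" "A' \<in> {mat 1, - mat 1}"
  from twisted_rel_Gamma_iff[OF assms(1-3) this, of z z']
  show "((real_vec z, A), (real_vec z', A')) \<in> twisted_rel (xi (d, D)) \<longleftrightarrow> A = A' \<and> \<kappa> A z = \<kappa> A z'"
    unfolding rel by blast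
qed

theorem proposition5p11:
  fixes d :: "real^'n::finite" and D :: "real^'n^'n"
  assumes "CARD('n) \<ge> 2"
    and "invertible D"
    and "bij_betw (xi (d, D)) Gamma Gamma"
    and "\<forall>i. 2 * d $ i \<in> \<int>"
    and "\<forall>i j. D $ i $ j \<in> \<int>" and "\<forall>i j. matrix_inv D $ i $ j \<in> \<int>"
  shows "reidemeister (xi (d, D)) =
     ereal (1/2) * (\<Sum>A\<in>{mat 1, - mat 1}. abs_inf (det (mat 1 - A ** D)))
     + ereal (real (O_count (\<chi> i j. \<lfloor>(mat 1 - D) $ i $ j\<rfloor>) (\<chi> i. \<lfloor>2 * d $ i\<rfloor>)))"
proof -
  have D_int: "\<And>i j. D $ i $ j \<in> \<int>" and d_int: "\<And>i. 2 * d $ i \<in> \<int>"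
    using assms(4,5) by blast+
  obtain \<kappa> :: "real^'n^'n \<Rightarrow> int^'n \<Rightarrow> (int^'n) set"
    where rel: "\<And>A z z'. reflected_coset_rel (holonomy_matrix D A) (holonomy_shift d A) z z' \<longleftrightarrow> \<kappa> A z = \<kappa> A z'"
    and fin: "\<And>A. finite (range (\<kappa> A)) \<longleftrightarrow> det (holonomy_matrix D A) \<noteq> 0"
    and count: "\<And>A. det (holonomy_matrix D A) \<noteq> 0 \<Longrightarrow>
      2 * card (range (\<kappa> A)) = nat \<bar>det (holonomy_matrix D A)\<bar> + O_count (holonomy_matrix D A) (holonomy_shift d A)"
    using reflected_coset_class_family[of "holonomy_matrix D" "holonomy_shift d"] by blast
  have "reidemeister (xi (d, D)) = (if \<forall>A\<in>{mat 1, - mat 1}. finite (range (\<kappa> A))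
      then ereal (\<Sum>A\<in>{mat 1, - mat 1}. card (range (\<kappa> A))) else \<infinity>)"
    using assms(2) D_int d_int rel by (rule reidemeister_xi_eq_sum_card)
  also have "\<dots> = ereal (1/2) * (\<Sum>A\<in>{mat 1, - mat 1}. abs_inf (of_int (det (holonomy_matrix D A))))
      + ereal (O_count (\<chi> i j. \<lfloor>(mat 1 - D) $ i $ j\<rfloor>) (\<chi> i. \<lfloor>2 * d $ i\<rfloor>))"
    by (intro ereal_half_sum_abs_inf card_mat_1_uminus_mat_1)
      (simp_all add: fin count O_count_holonomy_independent[OF _ D_int d_int])
  also have "(\<Sum>A\<in>{mat 1, - mat 1}. abs_inf (of_int (det (holonomy_matrix D A)))) =
      (\<Sum>A\<in>{mat 1, - mat 1}. abs_inf (det (mat 1 - A ** D)))"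
    by (intro sum.cong) (simp_all add: det_holonomy_matrix[OF _ D_int])
  finally show ?thesis .
qed

end
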